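(* For the $m\times m$ matrix multiplication tensor $\mathcal M_m$ one has $\underline R(\mathcal M_m)\ge\frac32m^2-\frac12$ if $m$ is odd, and $\underline R(\mathcal M_m)\ge\frac32m^2-2$ if $m$ is even.
   Context: $\mathcal M_m=\sum_{i,j,l=1}^m|ij\rangle\otimes|jl\rangle\otimes|li\rangle\in\bigotimes^3\mathbb C^{m\times m}$, where $|ij\rangle$ denotes the standard basis of $\mathbb C^{m\times m}$. The border rank $\underline R(w)$ of a tensor $w$ is the least $r$ such that $w$ is a limit of tensors each expressible as a sum of at most $r$ tensors of the form $u\otimes v\otimes x$. *)

theory Defs
  imports Complex_Main
begin

text \<open>Tensors in C^I (x) C^I (x) C^I for a finite index set I are represented as
  functions of three indices; only their values on I x I x I matter.\<close>

type_synonym idx = "nat \<times> nat"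
type_synonym tensor3 = "idx \<Rightarrow> idx \<Rightarrow> idx \<Rightarrow> complex"

definition mat_idx :: "nat \<Rightarrow> idx set" where
  "mat_idx m = {0..<m} \<times> {0..<m}"

definition matmul_tensor :: "nat \<Rightarrow> tensor3" where
  "matmul_tensor m = (\<lambda>a b c. \<Sum>i<m. \<Sum>j<m. \<Sum>l<m.
      (if a = (i,j) \<and> b = (j,l) \<and> c = (l,i) then 1 else 0))"

definition sum_rank_one :: "nat \<Rightarrow> (nat \<Rightarrow> idx \<Rightarrow> complex) \<Rightarrow> (nat \<Rightarrow> idx \<Rightarrow> complex)
     \<Rightarrow> (nat \<Rightarrow> idx \<Rightarrow> complex) \<Rightarrow> tensor3" where
  "sum_rank_one r u v x = (\<lambda>a b c. \<Sum>s<r. u s a * v s b * x s c)"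

text \<open>T is a limit of tensors of rank at most r (convergence in the finite-dimensional
  space C^I (x) C^I (x) C^I, i.e. coordinatewise on I x I x I).\<close>
definition border_rank_le :: "idx set \<Rightarrow> tensor3 \<Rightarrow> nat \<Rightarrow> bool" where
  "border_rank_le I T r \<longleftrightarrow>
     (\<exists>u v x :: nat \<Rightarrow> nat \<Rightarrow> idx \<Rightarrow> complex.
        \<forall>a\<in>I. \<forall>b\<in>I. \<forall>c\<in>I.
          (\<lambda>k. sum_rank_one r (u k) (v k) (x k) a b c) \<longlonglongrightarrow> T a b c)"

definition border_rank :: "idx set \<Rightarrow> tensor3 \<Rightarrow> nat" where
  "border_rank I T = (LEAST r. border_rank_le I T r)"

end

theory Submission
  imports Defs "Jordan_Normal_Form.Determinant"
begin

text \<open>Strassen's equations, i.e. a Koszul flattening. Contract the first factor of a tensor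
  T with three linear forms \<open>\<alpha>\<^sub>0, \<alpha>\<^sub>1, \<alpha>\<^sub>2\<close> and form the \<open>3m\<^sup>2 \<times> 3m\<^sup>2\<close> matrix with entry
  \<open>\<Sum>\<^sub>k \<epsilon>\<^sub>p\<^sub>q\<^sub>k T(\<alpha>\<^sub>k)\<^sub>b\<^sub>c\<close> at row \<open>(p,c)\<close> and column \<open>(q,b)\<close>.
  For a rank-one tensor this is a skew-symmetric \<open>3 \<times> 3\<close> matrix (rank at most 2) tensored
  with a rank-one matrix, so the flattening of a sum of r rank-one tensors has rank at most 2r
  and is singular when \<open>2r < 3m\<^sup>2\<close>; by continuity of the determinant the same holds in the
  limit, i.e. for border rank r. For the matrix multiplication tensor and the forms given by the
  identity, the cyclic shift and \<open>diag(0,\<dots>,m-1)\<close> the flattening is invertible as soon as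
  \<open>m \<ge> 2\<close>, whence \<open>2 R(M\<^sub>m) \<ge> 3m\<^sup>2\<close>; for \<open>m = 1\<close> it suffices that \<open>M\<^sub>1 \<noteq> 0\<close>.\<close>

lemma sum_lessThan_mult:
  fixes f :: "nat \<Rightarrow> 'a::comm_monoid_add"
  shows "(\<Sum>l<a*b. f l) = (\<Sum>i<a. \<Sum>j<b. f (i*b + j))"
proof -
  have "sum f {i*b..<i*b+b} = (\<Sum>j<b. f (i*b + j))" for i
    using sum.shift_bounds_nat_ivl[of f 0 "i*b" b] by (simp add: lessThan_atLeast0 add.commute)
  then show ?thesis by (simp flip: sum.nat_group)
qed

lemma sum_lessThan_3: "(\<Sum>q<3. f q) = f 0 + f 1 + f (2::nat)"
  by (simp add: eval_nat_numeral)

lemma det_eq_0_if_factors_through: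
  fixes K :: "'a::idom mat"
  assumes K: "K \<in> carrier_mat N N" and L: "finite L" "card L < N"
    and entries: "\<And>R C. R < N \<Longrightarrow> C < N \<Longrightarrow> K $$ (R,C) = (\<Sum>l\<in>L. f R l * g l C)"
  shows "det K = 0"
proof -
  obtain h where h: "bij_betw h {0..<card L} L"
    using ex_bij_betw_nat_finite[OF L(1)] by blast
  define A where "A = mat N N (\<lambda>(R,i). if i < card L then f R (h i) else 0)"
  define B where "B = mat N N (\<lambda>(i,C). if i < card L then g (h i) C else 0)"
  have A: "A \<in> carrier_mat N N" and B: "B \<in> carrier_mat N N"
    by (simp_all add: A_def B_def)
  have "K = A * B"
  proof (rule eq_matI)
    fix R C assume "R < dim_row (A * B)" "C < dim_col (A * B)"
    then have RC: "R < N" "C < N" using A B by simp_all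
    have "(A * B) $$ (R,C) = (\<Sum>i\<in>{0..<N}. A $$ (R,i) * B $$ (i,C))"
      using RC A B by (simp add: scalar_prod_def)
    also have "\<dots> = (\<Sum>i\<in>{0..<card L}. f R (h i) * g (h i) C)"
      using RC L by (intro sum.mono_neutral_cong_right) (auto simp: A_def B_def)
    also have "\<dots> = (\<Sum>l\<in>L. f R l * g l C)"
      by (rule sum.reindex_bij_betw[OF h])
    finally show "K $$ (R,C) = (A * B) $$ (R,C)" using entries RC by simp
  qed (use K A B in auto)
  moreover have "det A = 0"
  proof -
    \<comment> \<open>the last column of A vanishes because \<open>card L < N\<close>\<close>
    have "A *\<^sub>v unit_vec N (N - 1) = 0\<^sub>v N"
      using L by (intro eq_vecI) (auto simp: A_def)
    then show ?thesis
      unfolding det_0_iff_vec_prod_zero[OF A] using L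
      by (intro exI[of _ "unit_vec N (N - 1)"]) simp
  qed
  ultimately show ?thesis using det_mult[OF A B] by simp
qed

lemma tendsto_det:
  fixes A :: "nat \<Rightarrow> 'a::real_normed_field mat"
  assumes "\<And>k. A k \<in> carrier_mat n n" "B \<in> carrier_mat n n"
    and "\<And>i j. i < n \<Longrightarrow> j < n \<Longrightarrow> (\<lambda>k. A k $$ (i,j)) \<longlonglongrightarrow> B $$ (i,j)"
  shows "(\<lambda>k. det (A k)) \<longlonglongrightarrow> det B"
  unfolding det_def'[OF assms(1)] det_def'[OF assms(2)]
  by (intro tendsto_sum tendsto_mult_left tendsto_prod assms(3)) (auto simp: permutes_in_image)

definition levi_civita :: "nat \<Rightarrow> nat \<Rightarrow> nat \<Rightarrow> 'a::ring_1" where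
  "levi_civita p q k =
    (if (p,q,k) \<in> {(0,1,2), (1,2,0), (2,0,1)} then 1
     else if (p,q,k) \<in> {(0,2,1), (2,1,0), (1,0,2)} then -1 else 0)"

definition cross_mat :: "(nat \<Rightarrow> 'a::ring_1) \<Rightarrow> nat \<Rightarrow> nat \<Rightarrow> 'a" where
  "cross_mat A p q = (\<Sum>k<3. levi_civita p q k * A k)"

lemma cross_mat_simps:
  "cross_mat A 0 0 = 0" "cross_mat A 0 1 = A 2" "cross_mat A 0 2 = - A 1"
  "cross_mat A 1 0 = - A 2" "cross_mat A 1 1 = 0" "cross_mat A 1 2 = A 0"
  "cross_mat A 2 0 = A 1" "cross_mat A 2 1 = - A 0" "cross_mat A 2 2 = 0"
  by (simp_all add: cross_mat_def levi_civita_def eval_nat_numeral)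

lemma cross_mat_eq_0: "p \<ge> 3 \<or> q \<ge> 3 \<Longrightarrow> cross_mat A p q = 0"
  by (auto simp: cross_mat_def levi_civita_def)

lemma cross_mat_mult_self:
  fixes A :: "nat \<Rightarrow> 'a::comm_ring_1"
  shows "(\<Sum>q<3. cross_mat A p q * A q) = 0"
proof (cases "p < 3")
  case True
  then have "p = 0 \<or> p = 1 \<or> p = 2" by auto
  then show ?thesis by (auto simp: sum_lessThan_3 cross_mat_simps[unfolded One_nat_def] mult.commute)
qed (simp add: cross_mat_eq_0)

lemma factor_rank_2_if_kernel:
  fixes M :: "nat \<Rightarrow> nat \<Rightarrow> 'a::field"
  assumes ker: "\<And>p. M p a * v a + M p b * v b + M p j * v j = 0"
    and abj: "{a, b, j} = {0, 1, 2}" "distinct [a, b, j]" and "v j \<noteq> 0"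
  shows "\<exists>P Q. \<forall>p. \<forall>q<3. M p q = (\<Sum>t<2::nat. P p t * Q t q)"
proof -
  define c :: "nat \<Rightarrow> nat" where "c t = (if t = 0 then a else b)" for t
  \<comment> \<open>column j is a combination of columns a and b\<close>
  define Q where "Q t q = (if q = c t then 1 else if q = j then - v (c t) / v j else 0)" for t q
  have "M p q = (\<Sum>t<2::nat. M p (c t) * Q t q)" if "q < 3" for p q
  proof -
    have "q = a \<or> q = b \<or> q = j"
      using that abj(1) by (auto simp: eval_nat_numeral less_Suc_eq)
    moreover have "M p j * v j = - (M p a * v a + M p b * v b)"
      by (metis ker neg_eq_iff_add_eq_0)
    then have "M p j = - (M p a * v a + M p b * v b) / v j"
      using \<open>v j \<noteq> 0\<close> by (simp add: eq_divide_eq)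
    ultimately show ?thesis
      using abj(2) by (auto simp: Q_def c_def eval_nat_numeral diff_divide_distrib)
  qed
  then show ?thesis
    by (intro exI[of _ "\<lambda>p t. M p (c t)"] exI[of _ Q]) blast
qed

lemma cross_mat_factor_rank_2:
  fixes A :: "nat \<Rightarrow> 'a::field"
  shows "\<exists>P Q. \<forall>p. \<forall>q<3. cross_mat A p q = (\<Sum>t<2::nat. P p t * Q t q)"
proof -
  have ker: "cross_mat A p 0 * A 0 + cross_mat A p 1 * A 1 + cross_mat A p 2 * A 2 = 0" for p
    using cross_mat_mult_self[of A p] by (simp add: sum_lessThan_3)
  consider "A 0 \<noteq> 0" | "A 1 \<noteq> 0" | "A 2 \<noteq> 0" | "A 0 = 0" "A 1 = 0" "A 2 = 0"
    by blast
  then show ?thesis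
  proof cases
    case 1
    then show ?thesis
      by (intro factor_rank_2_if_kernel[of _ 1 A 2 0]) (use ker in \<open>auto simp: ac_simps\<close>)
  next
    case 2
    then show ?thesis
      by (intro factor_rank_2_if_kernel[of _ 0 A 2 1]) (use ker in \<open>auto simp: ac_simps\<close>)
  next
    case 3
    then show ?thesis
      by (intro factor_rank_2_if_kernel[of _ 0 A 1 2]) (use ker in \<open>auto simp: ac_simps\<close>)
  next
    case 4
    then have "cross_mat A p q = 0" if "q < 3" for p q
      using that by (auto simp: cross_mat_def levi_civita_def eval_nat_numeral)
    then show ?thesis by (intro exI[of _ "\<lambda>p t. 0"]) simp
  qed
qed

text \<open>Rows and columns of the flattening are indexed by \<open>(p, (i, j))\<close> with \<open>p < 3\<close> and
  \<open>(i, j) \<in> mat_idx m\<close>, encoded as the number \<open>p*m\<^sup>2 + i*m + j\<close>.\<close>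

definition koszul_index :: "nat \<Rightarrow> nat \<Rightarrow> nat \<times> idx" where
  "koszul_index m R = (R div (m*m), (R mod (m*m) div m, R mod m))"

lemma koszul_index_bounds:
  assumes "R < 3*(m*m)"
  shows "fst (koszul_index m R) < 3" "snd (koszul_index m R) \<in> mat_idx m"
proof -
  have "m > 0" using assms by (cases m) auto
  then show "fst (koszul_index m R) < 3" "snd (koszul_index m R) \<in> mat_idx m"
    using assms by (auto simp: koszul_index_def mat_idx_def less_mult_imp_div_less)
qed

lemma koszul_index_code:
  assumes "q < 3" "i < m" "j < m"
  shows "q*(m*m) + i*m + j < 3*(m*m)" "koszul_index m (q*(m*m) + i*m + j) = (q, (i, j))"
proof -
  have "i*m + j < Suc i * m" using assms by simp
  also have "\<dots> \<le> m*m" using assms by (intro mult_right_mono) auto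
  finally have ij: "i*m + j < m*m" .
  have "q*(m*m) + (i*m + j) < Suc q * (m*m)" using ij by simp
  also have "\<dots> \<le> 3*(m*m)" using assms by (intro mult_right_mono) auto
  finally show "q*(m*m) + i*m + j < 3*(m*m)" by simp
  have "(q*(m*m) + (i*m + j)) mod m = (j + (q*m + i) * m) mod m"
    by (simp add: algebra_simps)
  then have "(q*(m*m) + (i*m + j)) mod m = j"
    using assms by (simp only: mod_mult_self1) simp
  then show "koszul_index m (q*(m*m) + i*m + j) = (q, (i, j))"
    using ij assms by (simp add: koszul_index_def add.assoc)
qed

lemma koszul_index_decomp:
  "R = fst (koszul_index m R) * (m*m) + fst (snd (koszul_index m R)) * m + snd (snd (koszul_index m R))"
proof -
  have "R = R div (m*m) * (m*m) + (R mod (m*m) div m * m + R mod (m*m) mod m)"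
    by (simp only: div_mult_mod_eq)
  then show ?thesis by (simp add: koszul_index_def mod_mult2_eq add.assoc)
qed

lemma sum_koszul_indices:
  fixes f :: "nat \<Rightarrow> 'a::comm_monoid_add"
  shows "(\<Sum>R<3*(m*m). f R) = (\<Sum>q<3. \<Sum>i<m. \<Sum>j<m. f (q*(m*m) + i*m + j))"
  unfolding sum_lessThan_mult[of f 3] sum_lessThan_mult[of _ m m] by (simp add: add.assoc)

lemma cross_mat_sum:
  fixes A :: "'s \<Rightarrow> nat \<Rightarrow> 'a::comm_ring_1"
  shows "cross_mat (\<lambda>k. \<Sum>s\<in>S. c s * A s k) p q = (\<Sum>s\<in>S. c s * cross_mat (A s) p q)"
  unfolding cross_mat_def sum_distrib_left by (subst sum.swap) (simp add: mult_ac)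

definition koszul_flattening :: "nat \<Rightarrow> (nat \<Rightarrow> idx \<Rightarrow> complex) \<Rightarrow> tensor3 \<Rightarrow> complex mat" where
  "koszul_flattening m \<alpha> T = mat (3*(m*m)) (3*(m*m)) (\<lambda>(R, C).
     cross_mat (\<lambda>k. \<Sum>a\<in>mat_idx m. \<alpha> k a * T a (snd (koszul_index m C)) (snd (koszul_index m R)))
       (fst (koszul_index m R)) (fst (koszul_index m C)))"

lemma koszul_flattening_carrier: "koszul_flattening m \<alpha> T \<in> carrier_mat (3*(m*m)) (3*(m*m))"
  by (simp add: koszul_flattening_def)

lemma det_koszul_flattening_sum_rank_one:
  assumes "2*r < 3*(m*m)"
  shows "det (koszul_flattening m \<alpha> (sum_rank_one r u v x)) = 0"
proof -
  define A where "A s k = (\<Sum>a\<in>mat_idx m. \<alpha> k a * u s a)" for s k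
  have "\<forall>s. \<exists>P Q. \<forall>p. \<forall>q<3. cross_mat (A s) p q = (\<Sum>t<2::nat. P p t * Q t q)"
    using cross_mat_factor_rank_2 by blast
  then obtain P Q where PQ: "\<And>s p q. q < 3 \<Longrightarrow> cross_mat (A s) p q = (\<Sum>t<2::nat. P s p t * Q s t q)"
    by metis
  have contract: "(\<Sum>a\<in>mat_idx m. \<alpha> k a * sum_rank_one r u v x a b c)
      = (\<Sum>s<r. (v s b * x s c) * A s k)" for k b c
    unfolding sum_rank_one_def A_def sum_distrib_left by (subst sum.swap) (simp add: mult_ac)
  define f where "f R = (\<lambda>(s, t). P s (fst (koszul_index m R)) t * x s (snd (koszul_index m R)))"
    for R
  define g where "g = (\<lambda>(s, t) C. Q s t (fst (koszul_index m C)) * v s (snd (koszul_index m C)))"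
  show ?thesis
  proof (rule det_eq_0_if_factors_through[OF koszul_flattening_carrier, where L = "{..<r} \<times> {..<2}"
        and f = f and g = g])
    fix R C assume RC: "R < 3*(m*m)" "C < 3*(m*m)"
    obtain p c q b where pc: "koszul_index m R = (p, c)" and qb: "koszul_index m C = (q, b)"
      by (metis prod.exhaust)
    have "q < 3" using koszul_index_bounds(1)[OF RC(2)] qb by simp
    have "koszul_flattening m \<alpha> (sum_rank_one r u v x) $$ (R, C)
        = (\<Sum>s<r. v s b * x s c * cross_mat (A s) p q)"
      using RC pc qb by (simp add: koszul_flattening_def contract cross_mat_sum)
    also have "\<dots> = (\<Sum>(s, t)\<in>{..<r} \<times> {..<2}. (P s p t * x s c) * (Q s t q * v s b))"
      using \<open>q < 3\<close> by (simp add: PQ sum.cartesian_product[symmetric] sum_distrib_left mult_ac)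
    also have "\<dots> = (\<Sum>l\<in>{..<r} \<times> {..<2}. f R l * g l C)"
      using pc qb by (simp add: f_def g_def case_prod_beta')
    finally show "koszul_flattening m \<alpha> (sum_rank_one r u v x) $$ (R, C)
        = (\<Sum>l\<in>{..<r} \<times> {..<2}. f R l * g l C)" .
  qed (use assms in auto)
qed

lemma tendsto_det_koszul_flattening:
  assumes "\<forall>a\<in>mat_idx m. \<forall>b\<in>mat_idx m. \<forall>c\<in>mat_idx m. (\<lambda>k. S k a b c) \<longlonglongrightarrow> T a b c"
  shows "(\<lambda>k. det (koszul_flattening m \<alpha> (S k))) \<longlonglongrightarrow> det (koszul_flattening m \<alpha> T)"
  by (rule tendsto_det[OF koszul_flattening_carrier koszul_flattening_carrier])
    (auto simp: koszul_flattening_def cross_mat_def koszul_index_bounds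
      intro!: tendsto_sum tendsto_mult_left assms[rule_format])

lemma koszul_flattening_bound_border_rank:
  assumes "det (koszul_flattening m \<alpha> T) \<noteq> 0" "border_rank_le (mat_idx m) T r"
  shows "3*(m*m) \<le> 2*r"
proof (rule ccontr)
  assume "\<not> 3*(m*m) \<le> 2*r"
  obtain u v x where "\<forall>a\<in>mat_idx m. \<forall>b\<in>mat_idx m. \<forall>c\<in>mat_idx m.
      (\<lambda>k. sum_rank_one r (u k) (v k) (x k) a b c) \<longlonglongrightarrow> T a b c"
    using assms(2) unfolding border_rank_le_def by blast
  then have "(\<lambda>k. det (koszul_flattening m \<alpha> (sum_rank_one r (u k) (v k) (x k))))
      \<longlonglongrightarrow> det (koszul_flattening m \<alpha> T)"
    by (rule tendsto_det_koszul_flattening)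
  moreover have "(\<lambda>k. det (koszul_flattening m \<alpha> (sum_rank_one r (u k) (v k) (x k)))) = (\<lambda>k. 0)"
    using \<open>\<not> 3*(m*m) \<le> 2*r\<close> by (simp add: det_koszul_flattening_sum_rank_one)
  ultimately show False
    using assms(1) LIMSEQ_unique tendsto_const by metis
qed

lemma matmul_tensor_entry:
  assumes "a \<in> mat_idx m" "b \<in> mat_idx m" "c \<in> mat_idx m"
  shows "matmul_tensor m a b c = (if snd a = fst b \<and> snd b = fst c \<and> snd c = fst a then 1 else 0)"
proof -
  obtain a1 a2 b1 b2 c1 c2 where abc: "a = (a1, a2)" "b = (b1, b2)" "c = (c1, c2)"
    by (metis prod.exhaust)
  let ?K = "if b1 = a2 \<and> c1 = b2 \<and> c2 = a1 then 1 else 0 :: complex"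
  have "matmul_tensor m a b c = (\<Sum>i<m. \<Sum>j<m. \<Sum>l<m.
      if l = b2 then (if j = a2 then (if i = a1 then ?K else 0) else 0) else 0)"
    unfolding matmul_tensor_def abc by (intro sum.cong refl) auto
  also have "\<dots> = ?K"
    using assms abc by (simp add: mat_idx_def)
  finally show ?thesis using abc by auto
qed

lemma koszul_flattening_matmul_entry:
  assumes "p < 3" "x1 < m" "x2 < m" "q < 3" "i < m" "j < m"
  shows "koszul_flattening m \<alpha> (matmul_tensor m) $$ (p*(m*m) + x1*m + x2, q*(m*m) + i*m + j)
    = (if j = x1 then cross_mat (\<lambda>k. \<alpha> k (x2, i)) p q else 0)"
proof -
  have "(\<Sum>a\<in>mat_idx m. \<alpha> k a * matmul_tensor m a (i, j) (x1, x2))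
      = (\<Sum>a\<in>mat_idx m. if a = (x2, i) then (if j = x1 then \<alpha> k a else 0) else 0)" for k
    using assms by (intro sum.cong refl) (auto simp: matmul_tensor_entry mat_idx_def)
  then show ?thesis
    using assms by (simp add: koszul_flattening_def koszul_index_code mat_idx_def cross_mat_def)
qed

lemma koszul_flattening_matmul_mult_vec:
  assumes "p < 3" "x1 < m" "x2 < m" and w: "w \<in> carrier_vec (3*(m*m))"
  shows "(koszul_flattening m \<alpha> (matmul_tensor m) *\<^sub>v w) $ (p*(m*m) + x1*m + x2)
    = (\<Sum>q<3. cross_mat (\<lambda>k. \<Sum>i<m. w $ (q*(m*m) + i*m + x1) * \<alpha> k (x2, i)) p q)"
proof -
  let ?K = "koszul_flattening m \<alpha> (matmul_tensor m)"
  let ?R = "p*(m*m) + x1*m + x2"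
  have "(?K *\<^sub>v w) $ ?R = (\<Sum>C<3*(m*m). ?K $$ (?R, C) * w $ C)"
    using assms koszul_index_code(1) w
    by (simp add: koszul_flattening_def scalar_prod_def lessThan_atLeast0)
  also have "\<dots> = (\<Sum>q<3. \<Sum>i<m. \<Sum>j<m.
      if j = x1 then w $ (q*(m*m) + i*m + j) * cross_mat (\<lambda>k. \<alpha> k (x2, i)) p q else 0)"
    unfolding sum_koszul_indices using assms
    by (intro sum.cong refl) (simp add: koszul_flattening_matmul_entry)
  also have "\<dots> = (\<Sum>q<3. \<Sum>i<m. w $ (q*(m*m) + i*m + x1) * cross_mat (\<lambda>k. \<alpha> k (x2, i)) p q)"
    using assms by simp
  finally show ?thesis by (simp add: cross_mat_sum)
qed

definition strassen_forms :: "nat \<Rightarrow> nat \<Rightarrow> idx \<Rightarrow> complex" where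
  "strassen_forms m k a =
    (if k = 0 then (if snd a = fst a then 1 else 0)
     else if k = 1 then (if snd a = Suc (fst a) mod m then 1 else 0)
     else (if snd a = fst a then of_nat (fst a) else 0))"

lemma sum_strassen_forms:
  assumes "x < m"
  shows "(\<Sum>i<m. g i * strassen_forms m 0 (x, i)) = g x"
    "(\<Sum>i<m. g i * strassen_forms m 1 (x, i)) = g (Suc x mod m)"
    "(\<Sum>i<m. g i * strassen_forms m 2 (x, i)) = of_nat x * g x"
  using assms by (simp_all add: strassen_forms_def if_distrib[of "\<lambda>z. _ * z"] mult.commute
      cong: if_cong)

lemma det_koszul_flattening_matmul:
  assumes "m \<ge> 2"
  shows "det (koszul_flattening m (strassen_forms m) (matmul_tensor m)) \<noteq> 0"
proof
  let ?N = "3*(m*m)"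
  assume "det (koszul_flattening m (strassen_forms m) (matmul_tensor m)) = 0"
  then obtain w where w: "w \<in> carrier_vec ?N" "w \<noteq> 0\<^sub>v ?N"
    and ker: "koszul_flattening m (strassen_forms m) (matmul_tensor m) *\<^sub>v w = 0\<^sub>v ?N"
    using det_0_iff_vec_prod_zero[OF koszul_flattening_carrier] by blast
  define Y where "Y q i j = w $ (q*(m*m) + i*m + j)" for q i j
  have row: "(\<Sum>q<3. cross_mat (\<lambda>k. \<Sum>i<m. Y q i x1 * strassen_forms m k (x2, i)) p q) = 0"
    if "p < 3" "x1 < m" "x2 < m" for p x1 x2
    using ker koszul_flattening_matmul_mult_vec[OF that w(1), symmetric] koszul_index_code(1)[OF that]
    by (simp add: Y_def)
  have row0: "of_nat x2 * Y 1 x2 x1 = Y 2 (Suc x2 mod m) x1"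
    and row1: "Y 2 x2 x1 = of_nat x2 * Y 0 x2 x1"
    and row2: "Y 0 (Suc x2 mod m) x1 = Y 1 x2 x1" if "x1 < m" "x2 < m" for x1 x2
    using row[of 0 x1 x2] row[of 1 x1 x2] row[of 2 x1 x2] that
    by (simp_all add: sum_lessThan_3 cross_mat_simps[unfolded One_nat_def]
        sum_strassen_forms[unfolded One_nat_def])
  have Y0: "Y 0 j x1 = 0" if "x1 < m" "j < m" for j x1
  proof -
    define i where "i = (if j = 0 then m - 1 else j - 1)"
    have i: "i < m" "Suc i mod m = j" "i \<noteq> j"
      using assms that by (auto simp: i_def)
    \<comment> \<open>compute Y 2 j x1 in two ways; the cyclic predecessor i differs from j because m \<ge> 2\<close>
    have "of_nat i * Y 0 j x1 = of_nat j * Y 0 j x1"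
      using row0[OF that(1) i(1)] row1[OF that] row2[OF that(1) i(1)] i(2) by simp
    then show ?thesis using i(3) by simp
  qed
  have Y: "Y q i j = 0" if "q < 3" "i < m" "j < m" for q i j
  proof -
    have "q = 0 \<or> q = 1 \<or> q = 2" using that by auto
    then show ?thesis
      using that Y0 row1[of j i] row2[of j i] by auto
  qed
  have "w = 0\<^sub>v ?N"
  proof (rule eq_vecI)
    fix R assume "R < dim_vec (0\<^sub>v ?N :: complex vec)"
    then have R: "R < ?N" by simp
    have "w $ R = Y (fst (koszul_index m R)) (fst (snd (koszul_index m R))) (snd (snd (koszul_index m R)))"
      unfolding Y_def by (subst koszul_index_decomp[of R m]) simp
    also have "\<dots> = 0"
      using koszul_index_bounds[OF R] by (intro Y) (auto simp: mat_idx_def mem_Times_iff)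
    finally show "w $ R = 0\<^sub>v ?N $ R" using R by simp
  qed (use w(1) in simp)
  with w(2) show False by simp
qed

lemma border_rank_le_if_eq:
  assumes "\<And>a b c. a \<in> I \<Longrightarrow> b \<in> I \<Longrightarrow> c \<in> I \<Longrightarrow> sum_rank_one r u v x a b c = T a b c"
  shows "border_rank_le I T r"
  unfolding border_rank_le_def using assms
  by (intro exI[of _ "\<lambda>k. u"] exI[of _ "\<lambda>k. v"] exI[of _ "\<lambda>k. x"]) simp

lemma border_rank_le_border_rank:
  "border_rank_le I T r \<Longrightarrow> border_rank_le I T (border_rank I T)"
  unfolding border_rank_def by (rule LeastI)

lemma border_rank_le_0_imp_eq_0:
  assumes "border_rank_le I T 0" "a \<in> I" "b \<in> I" "c \<in> I"
  shows "T a b c = 0"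
proof -
  have "(\<lambda>k. 0) \<longlonglongrightarrow> T a b c"
    using assms unfolding border_rank_le_def sum_rank_one_def by auto
  then show ?thesis using LIMSEQ_unique tendsto_const by blast
qed

lemma border_rank_le_matmul_cube: "border_rank_le (mat_idx m) (matmul_tensor m) (m*m*m)"
proof (rule border_rank_le_if_eq)
  define u where "u s a = (if a = (s div m div m, s div m mod m) then 1 else 0 :: complex)" for s a
  define v where "v s b = (if b = (s div m mod m, s mod m) then 1 else 0 :: complex)" for s b
  define x where "x s c = (if c = (s mod m, s div m div m) then 1 else 0 :: complex)" for s c
  fix a b c
  have "sum_rank_one (m*m*m) u v x a b c
      = (\<Sum>i<m. \<Sum>j<m. \<Sum>l<m. u ((i*m + j)*m + l) a * v ((i*m + j)*m + l) b * x ((i*m + j)*m + l) c)"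
    by (simp add: sum_rank_one_def sum_lessThan_mult)
  also have "\<dots> = matmul_tensor m a b c"
    unfolding matmul_tensor_def by (intro sum.cong refl) (auto simp: u_def v_def x_def)
  finally show "sum_rank_one (m*m*m) u v x a b c = matmul_tensor m a b c" .
qed

lemma border_rank_matmul_ge:
  assumes "m \<ge> 2"
  shows "3*(m*m) \<le> 2 * border_rank (mat_idx m) (matmul_tensor m)"
  using koszul_flattening_bound_border_rank[OF det_koszul_flattening_matmul[OF assms]]
    border_rank_le_border_rank[OF border_rank_le_matmul_cube] .

lemma border_rank_matmul_1: "border_rank (mat_idx 1) (matmul_tensor 1) \<ge> 1"
proof (rule ccontr)
  assume "\<not> ?thesis"
  then have "border_rank (mat_idx 1) (matmul_tensor 1) = 0" by simp
  then have "border_rank_le (mat_idx 1) (matmul_tensor 1) 0"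
    using border_rank_le_border_rank[OF border_rank_le_matmul_cube[of 1]] by simp
  then have "matmul_tensor 1 (0,0) (0,0) (0,0) = 0"
    by (rule border_rank_le_0_imp_eq_0) (simp_all add: mat_idx_def)
  then show False by (simp add: matmul_tensor_def)
qed

theorem theorem4p5:
  fixes m :: nat
  shows "(odd m \<longrightarrow> real (border_rank (mat_idx m) (matmul_tensor m)) \<ge> 3/2 * real m ^ 2 - 1/2)
       \<and> (even m \<longrightarrow> real (border_rank (mat_idx m) (matmul_tensor m)) \<ge> 3/2 * real m ^ 2 - 2)"
proof -
  consider "m = 0" | "m = 1" | "m \<ge> 2" by linarith
  then have "3/2 * real m ^ 2 - 1/2 \<le> real (border_rank (mat_idx m) (matmul_tensor m))"
  proof cases
    case 3
    then have "real (3*(m*m)) \<le> real (2 * border_rank (mat_idx m) (matmul_tensor m))"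
      using border_rank_matmul_ge of_nat_le_iff by blast
    then show ?thesis by (simp add: power2_eq_square)
  qed (use border_rank_matmul_1 in auto)
  then show ?thesis by linarith
qed

end
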